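(* Suppose Assumptions 1, 2, 3' and 5 hold, with all expectations finite. Then $W_{TC}=\Delta$.
   Context: Standing framework. Let $(Y(0),Y(1),V,G,T)$ be random variables on a common probability space, with $G\in\{0,1\}$ (group; $G=1$ is the "treatment group"), $T\in\{0,1\}$ (period), $V$ real-valued, and let $(v_{gt})_{(g,t)\in\{0,1\}^2}$ be real constants. The treatment is $D=1\{V\geq v_{GT}\}$ and the potential treatments are $D(t)=1\{V\geq v_{Gt}\}$, $t\in\{0,1\}$, so that $D=D(T)$. The observed outcome is $Y=DY(1)+(1-D)Y(0)$. For any random variable $R$, $R_{gt}$ denotes a random variable distributed as $R$ conditional on $\{G=g,T=t\}$ and $R_{dgt}$ one distributed as $R$ conditional on $\{D=d,G=g,T=t\}$. Let $S=\{D(0)<D(1),\,G=1\}$ and $\Delta=E(Y(1)-Y(0)\mid S,T=1)$. Assumption 1: $D=1\{V\geq v_{GT}\}$ with $V$ independent of $T$ conditional on $G$. Assumption 2: $E(D_{11})>E(D_{10})$ and $E(D_{11})-E(D_{10})>E(D_{01})-E(D_{00})$. Assumption 3' (conditional common trends): for each $d\in\{0,1\}$, $E(Y(d)\mid G,T=1,D(0)=d)-E(Y(d)\mid G,T=0,D(0)=d)$ does not depend on $G$. Assumption 5: $0<E(D_{01})=E(D_{00})<1$. For $d\in\{0,1\}$ let $\delta_d=E(Y_{d01})-E(Y_{d00})$, and define $$W_{TC}=\frac{E(Y\mid G=1,T=1)-E\big(Y+(1-D)\delta_0+D\delta_1\mid G=1,T=0\big)}{E(D\mid G=1,T=1)-E(D\mid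 G=1,T=0)}.$$ *)

theory Defs
  imports "HOL-Probability.Probability"
begin

definition cexp :: "'a measure \<Rightarrow> ('a \<Rightarrow> real) \<Rightarrow> 'a set \<Rightarrow> real" where
  "cexp M X A = (LINT x:A|M. X x) / measure M A"

definition ptreat :: "('a \<Rightarrow> real) \<Rightarrow> ('a \<Rightarrow> real) \<Rightarrow> (real \<Rightarrow> real \<Rightarrow> real) \<Rightarrow> real \<Rightarrow> 'a \<Rightarrow> real" where
  "ptreat V G v t x = (if V x \<ge> v (G x) t then 1 else 0)"

definition treat :: "('a \<Rightarrow> real) \<Rightarrow> ('a \<Rightarrow> real) \<Rightarrow> ('a \<Rightarrow> real) \<Rightarrow> (real \<Rightarrow> real \<Rightarrow> real) \<Rightarrow> 'a \<Rightarrow> real" where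
  "treat V G T v x = ptreat V G v (T x) x"

definition outcome :: "('a \<Rightarrow> real) \<Rightarrow> ('a \<Rightarrow> real) \<Rightarrow> ('a \<Rightarrow> real) \<Rightarrow> 'a \<Rightarrow> real" where
  "outcome D Y0 Y1 x = D x * Y1 x + (1 - D x) * Y0 x"

end

theory Submission imports Defs begin

text \<open>In the treatment group, Assumption 1 gives \<open>E(D\<^sub>1\<^sub>t) = P(V \<ge> v\<^sub>1\<^sub>t | G = 1)\<close>, so the rise in
  take-up forces \<open>v\<^sub>1\<^sub>1 \<le> v\<^sub>1\<^sub>0\<close>: nobody switches out of treatment and the switchers are the units with
  \<open>v\<^sub>1\<^sub>1 \<le> V < v\<^sub>1\<^sub>0\<close>. Splitting each treatment-group cell by \<open>D(0)\<close>, \<open>E(Y\<^sub>1\<^sub>1)\<close> is the mixture of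
  \<open>Y(1)\<close> among \<open>D(0) = 1\<close>, \<open>Y(0)\<close> among \<open>D(0) = 0\<close> and the switchers' effect \<open>\<Delta>\<close> weighted by the
  take-up increase, while \<open>E(Y\<^sub>1\<^sub>0)\<close> is the same mixture without the switchers. In the control group
  Assumption 5 leaves no mass of \<open>V\<close> between the two thresholds, so \<open>D = D(0)\<close> almost surely and \<open>\<delta>\<^sub>d\<close>
  is the trend of \<open>Y(d)\<close> among \<open>D(0) = d\<close>; Assumption 3' transfers it to the treatment group, and
  the numerator of \<open>W\<^sub>T\<^sub>C\<close> collapses to the take-up increase times \<open>\<Delta>\<close>.\<close>

lemma (in finite_measure) set_integral_eq_measure_mult_cexp:
  fixes f :: "'a \<Rightarrow> real"
  assumes "A \<in> sets M" "f \<in> borel_measurable M"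
  shows "(LINT x:A|M. f x) = measure M A * cexp M f A"
proof (cases "measure M A = 0")
  case True
  then have "AE x in M. x \<notin> A"
    using assms(1) by (intro AE_not_in) (simp add: emeasure_eq_measure null_sets_def)
  then have "(LINT x:A|M. f x) = (LINT x:{}|M. f x)"
    using assms by (intro set_integral_cong_set) (auto simp: set_borel_measurable_def)
  then show ?thesis using True by (simp add: set_lebesgue_integral_def)
qed (simp add: cexp_def)

lemma cexp_cong_AE:
  fixes f :: "'a \<Rightarrow> real"
  assumes "A \<in> sets M" "B \<in> sets M" "f \<in> borel_measurable M" "AE x in M. x \<in> A \<longleftrightarrow> x \<in> B"
  shows "cexp M f A = cexp M f B"
proof -
  have "AE x in M. x \<in> B \<longleftrightarrow> x \<in> A" using assms(4) by auto
  then have "(LINT x:A|M. f x) = (LINT x:B|M. f x)"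
    using assms by (intro set_integral_cong_set) (auto simp: set_borel_measurable_def)
  then show ?thesis using measure_eq_AE[OF assms(4) assms(1,2)] by (simp add: cexp_def)
qed

lemma integrable_imp_set_integrable:
  fixes f :: "'a \<Rightarrow> real"
  shows "integrable M f \<Longrightarrow> A \<in> sets M \<Longrightarrow> set_integrable M A f"
  unfolding set_integrable_def by (rule integrable_mult_indicator)

lemma cexp_cong:
  fixes f g :: "'a \<Rightarrow> real"
  assumes "A \<in> sets M" "\<And>x. x \<in> A \<Longrightarrow> f x = g x"
  shows "cexp M f A = cexp M g A"
  using set_lebesgue_integral_cong[of A M f g] assms by (simp add: cexp_def)

lemma cexp_diff:
  fixes f g :: "'a \<Rightarrow> real"
  assumes "integrable M f" "integrable M g" "A \<in> sets M"
  shows "cexp M (\<lambda>x. f x - g x) A = cexp M f A - cexp M g A"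
  using assms by (simp add: cexp_def integrable_imp_set_integrable diff_divide_distrib)

lemma (in finite_measure) measure_mult_cexp_add_const:
  fixes f :: "'a \<Rightarrow> real"
  assumes "integrable M f" "A \<in> sets M"
  shows "measure M A * cexp M (\<lambda>x. f x + c) A = measure M A * (cexp M f A + c)"
proof -
  have "(LINT x:A|M. f x + c) = (LINT x:A|M. f x) + measure M A * c"
    using assms by (simp add: integrable_imp_set_integrable set_integral_const emeasure_eq_measure)
  then show ?thesis
    using assms by (simp add: set_integral_eq_measure_mult_cexp distrib_left)
qed

lemma (in finite_measure) measure_mult_cexp_Un:
  fixes f :: "'a \<Rightarrow> real"
  assumes "integrable M f" "A \<in> sets M" "B \<in> sets M" "A \<inter> B = {}"
  shows "measure M (A \<union> B) * cexp M f (A \<union> B) = measure M A * cexp M f A + measure M B * cexp M f B"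
proof -
  have "(LINT x:A \<union> B|M. f x) = (LINT x:A|M. f x) + (LINT x:B|M. f x)"
    using assms by (intro set_integral_Un) (auto simp: integrable_imp_set_integrable)
  then show ?thesis
    using assms by (simp add: set_integral_eq_measure_mult_cexp)
qed

lemma ptreat_01: "ptreat V G v t x \<in> {0,1}"
  by (simp add: ptreat_def)

lemma ptreat_mono: "v (G x) 1 \<le> v (G x) 0 \<Longrightarrow> ptreat V G v 0 x \<le> ptreat V G v 1 x"
  by (simp add: ptreat_def)

lemma treat_eq_ptreat: "T x = t \<Longrightarrow> treat V G T v x = ptreat V G v t x"
  by (simp add: treat_def)

locale threshold_did = prob_space M
  for M :: "'a measure" and Y0 Y1 V G T :: "'a \<Rightarrow> real" and v :: "real \<Rightarrow> real \<Rightarrow> real" +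
  assumes measurable_Y0 [measurable]: "Y0 \<in> borel_measurable M"
    and measurable_Y1 [measurable]: "Y1 \<in> borel_measurable M"
    and measurable_V [measurable]: "V \<in> borel_measurable M"
    and measurable_G [measurable]: "G \<in> borel_measurable M"
    and measurable_T [measurable]: "T \<in> borel_measurable M"
    and G_01: "\<forall>x\<in>space M. G x \<in> {0, 1}" and T_01: "\<forall>x\<in>space M. T x \<in> {0, 1}"
    and cell_pos: "\<forall>g\<in>{0,1}. \<forall>t\<in>{0,1}. measure M {x\<in>space M. G x = g \<and> T x = t} > 0"
    and integrable_Y0: "integrable M Y0" and integrable_Y1: "integrable M Y1"
    and V_T_cond_indep: "\<forall>g\<in>{0,1}. \<forall>t\<in>{0,1}. \<forall>B\<in>sets borel.
        measure M {x\<in>space M. V x \<in> B \<and> T x = t \<and> G x = g} * measure M {x\<in>space M. G x = g}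
      = measure M {x\<in>space M. V x \<in> B \<and> G x = g} * measure M {x\<in>space M. T x = t \<and> G x = g}"
begin

abbreviation "D \<equiv> treat V G T v"
abbreviation "Y \<equiv> outcome D Y0 Y1"
abbreviation "cell g t \<equiv> {x\<in>space M. G x = g \<and> T x = t}"
abbreviation "stratum g t d \<equiv> {x\<in>space M. G x = g \<and> T x = t \<and> ptreat V G v 0 x = d}"
abbreviation "compliers g \<equiv> {x\<in>space M. ptreat V G v 0 x < ptreat V G v 1 x \<and> G x = g \<and> T x = 1}"

lemma measurable_ptreat [measurable]: "ptreat V G v t \<in> borel_measurable M"
proof -
  have "ptreat V G v t \<in> borel_measurable M \<longleftrightarrow>
      (\<lambda>x. if G x = 0 then of_bool (v 0 t \<le> V x) else of_bool (v 1 t \<le> V x) :: real) \<in> borel_measurable M"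
    by (rule measurable_cong) (use G_01 in \<open>auto simp: ptreat_def\<close>)
  then show ?thesis by simp
qed

lemma measurable_treat [measurable]: "D \<in> borel_measurable M"
proof -
  have "D \<in> borel_measurable M \<longleftrightarrow>
      (\<lambda>x. if T x = 0 then ptreat V G v 0 x else ptreat V G v 1 x) \<in> borel_measurable M"
    by (rule measurable_cong) (use T_01 in \<open>auto simp: treat_def\<close>)
  then show ?thesis by simp
qed

lemma measurable_outcome [measurable]: "Y \<in> borel_measurable M"
  unfolding outcome_def by measurable

lemma integrable_outcome: "integrable M Y"
proof (rule Bochner_Integration.integrable_bound)
  show "integrable M (\<lambda>x. \<bar>Y0 x\<bar> + \<bar>Y1 x\<bar>)" using integrable_Y0 integrable_Y1 by auto
  show "AE x in M. norm (Y x) \<le> norm (\<bar>Y0 x\<bar> + \<bar>Y1 x\<bar>)"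
    by (intro AE_I2) (auto simp: outcome_def treat_def ptreat_def)
qed simp

lemma integrable_treat: "integrable M D"
  by (rule integrable_const_bound[where B=1]) (auto simp: treat_def ptreat_def)

lemma measure_group_pos: "g \<in> {0,1} \<Longrightarrow> 0 < measure M {x\<in>space M. G x = g}"
  using cell_pos finite_measure_mono[of "cell g 0" "{x\<in>space M. G x = g}"]
  by fastforce

definition cond_survival :: "real \<Rightarrow> real \<Rightarrow> real" where
  "cond_survival g c = measure M {x\<in>space M. G x = g \<and> c \<le> V x} / measure M {x\<in>space M. G x = g}"

lemma measure_cell_above:
  assumes "g \<in> {0,1}" "t \<in> {0,1}"
  shows "measure M {x\<in>space M. G x = g \<and> T x = t \<and> c \<le> V x} = cond_survival g c * measure M (cell g t)"
proof -
  have "measure M {x\<in>space M. G x = g \<and> T x = t \<and> c \<le> V x} * measure M {x\<in>space M. G x = g}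
      = measure M {x\<in>space M. G x = g \<and> c \<le> V x} * measure M (cell g t)"
    using V_T_cond_indep assms by (auto dest!: bspec[of _ _ "{c..}"] simp: conj_ac)
  then show ?thesis
    using measure_group_pos[OF assms(1)] by (simp add: cond_survival_def field_simps)
qed

lemma cexp_treat_cell:
  assumes "g \<in> {0,1}" "t \<in> {0,1}"
  shows "cexp M D (cell g t) = cond_survival g (v g t)"
proof -
  have "(LINT x:cell g t|M. D x) = (LINT x|M. indicator {x\<in>space M. G x = g \<and> T x = t \<and> v g t \<le> V x} x)"
    unfolding set_lebesgue_integral_def
    by (rule Bochner_Integration.integral_cong) (auto simp: indicator_def treat_def ptreat_def)
  also have "\<dots> = cond_survival g (v g t) * measure M (cell g t)"
    using measure_cell_above[OF assms] by simp
  moreover have "measure M (cell g t) > 0"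
    using cell_pos assms by blast
  ultimately show ?thesis
    by (simp add: cexp_def)
qed

lemma cond_survival_antimono: "c \<le> c' \<Longrightarrow> cond_survival g c' \<le> cond_survival g c"
  unfolding cond_survival_def
  by (intro divide_right_mono finite_measure_mono) auto

lemma measure_cell_between:
  assumes "g \<in> {0,1}" "t \<in> {0,1}" "c \<le> c'"
  shows "measure M {x\<in>space M. G x = g \<and> T x = t \<and> c \<le> V x \<and> V x < c'}
    = (cond_survival g c - cond_survival g c') * measure M (cell g t)"
proof -
  let ?above = "\<lambda>c. {x\<in>space M. G x = g \<and> T x = t \<and> c \<le> V x}"
  have "{x\<in>space M. G x = g \<and> T x = t \<and> c \<le> V x \<and> V x < c'} = ?above c - ?above c'"
    using assms(3) by auto
  moreover have "measure M (?above c - ?above c') = measure M (?above c) - measure M (?above c')"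
    using assms(3) by (intro finite_measure_Diff) auto
  ultimately show ?thesis
    using measure_cell_above[OF assms(1,2)] by (simp add: algebra_simps)
qed

lemma threshold_decreasing:
  assumes "g \<in> {0,1}" "cexp M D (cell g 0) < cexp M D (cell g 1)"
  shows "v g 1 \<le> v g 0"
proof (rule ccontr)
  assume "\<not> v g 1 \<le> v g 0"
  then have "cond_survival g (v g 1) \<le> cond_survival g (v g 0)"
    by (simp add: cond_survival_antimono)
  then show False
    using assms(2) cexp_treat_cell[OF assms(1)] by simp
qed

text \<open>Equal take-up in both periods leaves no mass of \<open>V\<close> between the two thresholds of the group.\<close>

lemma treat_eq_ptreat0_AE:
  assumes "g \<in> {0,1}" "t \<in> {0,1}" "cexp M D (cell g 1) = cexp M D (cell g 0)"
  shows "AE x in M. x \<in> cell g t \<longrightarrow> D x = ptreat V G v 0 x"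
proof -
  define N where "N = {x\<in>space M. G x = g \<and> T x = 1 \<and> min (v g 0) (v g 1) \<le> V x \<and> V x < max (v g 0) (v g 1)}"
  have "cond_survival g (v g 1) = cond_survival g (v g 0)"
    using assms(3) cexp_treat_cell[OF assms(1)] by simp
  then have "cond_survival g (min (v g 0) (v g 1)) = cond_survival g (max (v g 0) (v g 1))"
    by (simp add: min_def max_def)
  then have "measure M N = 0"
    unfolding N_def using measure_cell_between[OF assms(1), of 1] by simp
  then have "N \<in> null_sets M"
    unfolding N_def by (simp add: emeasure_eq_measure null_sets_def)
  then show ?thesis
  proof (rule AE_I')
    show "{x\<in>space M. \<not> (x \<in> cell g t \<longrightarrow> D x = ptreat V G v 0 x)} \<subseteq> N"
      using T_01 by (force simp: N_def treat_def ptreat_def)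
  qed
qed

lemma cexp_outcome_stable_group:
  assumes "g \<in> {0,1}" "t \<in> {0,1}" "d \<in> {0,1}" "cexp M D (cell g 1) = cexp M D (cell g 0)"
  shows "cexp M Y {x\<in>space M. D x = d \<and> G x = g \<and> T x = t} = cexp M (if d = 1 then Y1 else Y0) (stratum g t d)"
proof -
  have "(LINT x:{x\<in>space M. D x = d \<and> G x = g \<and> T x = t}|M. Y x)
      = (LINT x:{x\<in>space M. D x = d \<and> G x = g \<and> T x = t}|M. (if d = 1 then Y1 else Y0) x)"
    using assms(3) by (intro set_lebesgue_integral_cong) (auto simp: outcome_def)
  then have "cexp M Y {x\<in>space M. D x = d \<and> G x = g \<and> T x = t}
      = cexp M (if d = 1 then Y1 else Y0) {x\<in>space M. D x = d \<and> G x = g \<and> T x = t}"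
    by (simp add: cexp_def)
  also have "\<dots> = cexp M (if d = 1 then Y1 else Y0) (stratum g t d)"
    using treat_eq_ptreat0_AE[OF assms(1,2,4)] by (intro cexp_cong_AE) auto
  finally show ?thesis .
qed

lemma outcome_trend_stable_group:
  assumes "g \<in> {0,1}" "d \<in> {0,1}" "cexp M D (cell g 1) = cexp M D (cell g 0)"
  shows "cexp M Y {x\<in>space M. D x = d \<and> G x = g \<and> T x = 1} - cexp M Y {x\<in>space M. D x = d \<and> G x = g \<and> T x = 0}
    = cexp M (if d = 1 then Y1 else Y0) (stratum g 1 d) - cexp M (if d = 1 then Y1 else Y0) (stratum g 0 d)"
  using cexp_outcome_stable_group[OF assms(1) _ assms(2,3)] by simp

lemma measure_stratum_treated:
  assumes "g \<in> {0,1}" "t \<in> {0,1}"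
  shows "measure M (stratum g t 1) = cond_survival g (v g 0) * measure M (cell g t)"
proof -
  have "stratum g t 1 = {x\<in>space M. G x = g \<and> T x = t \<and> v g 0 \<le> V x}"
    by (auto simp: ptreat_def)
  then show ?thesis using measure_cell_above[OF assms] by simp
qed

lemma measure_stratum_untreated:
  assumes "g \<in> {0,1}" "t \<in> {0,1}"
  shows "measure M (stratum g t 0) = (1 - cond_survival g (v g 0)) * measure M (cell g t)"
proof -
  have "cell g t = stratum g t 1 \<union> stratum g t 0" "stratum g t 1 \<inter> stratum g t 0 = {}"
    by (auto simp: ptreat_def)
  then have "measure M (cell g t) = measure M (stratum g t 1) + measure M (stratum g t 0)"
    by (simp add: finite_measure_Union)
  then show ?thesis using measure_stratum_treated[OF assms] by (simp add: algebra_simps)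
qed

lemma measure_compliers:
  assumes "g \<in> {0,1}" "v g 1 \<le> v g 0"
  shows "measure M (compliers g) = (cond_survival g (v g 1) - cond_survival g (v g 0)) * measure M (cell g 1)"
proof -
  have "compliers g = {x\<in>space M. G x = g \<and> T x = 1 \<and> v g 1 \<le> V x \<and> V x < v g 0}"
    by (auto simp: ptreat_def)
  then show ?thesis using measure_cell_between[OF assms(1) _ assms(2)] by simp
qed

lemma cexp_adjusted_outcome_period0:
  assumes "g \<in> {0,1}"
  shows "cexp M (\<lambda>x. Y x + (1 - D x) * d0 + D x * d1) (cell g 0)
    = cond_survival g (v g 0) * (cexp M Y1 (stratum g 0 1) + d1)
    + (1 - cond_survival g (v g 0)) * (cexp M Y0 (stratum g 0 0) + d0)"
proof -
  let ?F = "\<lambda>x. Y x + (1 - D x) * d0 + D x * d1"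
  have "integrable M ?F"
    using integrable_outcome integrable_treat by simp
  moreover have "cell g 0 = stratum g 0 1 \<union> stratum g 0 0" "stratum g 0 1 \<inter> stratum g 0 0 = {}"
    by (auto simp: ptreat_def)
  ultimately have "measure M (cell g 0) * cexp M ?F (cell g 0)
      = measure M (stratum g 0 1) * cexp M ?F (stratum g 0 1) + measure M (stratum g 0 0) * cexp M ?F (stratum g 0 0)"
    using measure_mult_cexp_Un[of ?F "stratum g 0 1" "stratum g 0 0"] by simp
  moreover have "cexp M ?F (stratum g 0 1) = cexp M (\<lambda>x. Y1 x + d1) (stratum g 0 1)"
    by (rule cexp_cong) (auto simp: outcome_def treat_def)
  moreover have "cexp M ?F (stratum g 0 0) = cexp M (\<lambda>x. Y0 x + d0) (stratum g 0 0)"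
    by (rule cexp_cong) (auto simp: outcome_def treat_def)
  ultimately have "measure M (cell g 0) * cexp M ?F (cell g 0)
      = measure M (cell g 0) * (cond_survival g (v g 0) * (cexp M Y1 (stratum g 0 1) + d1)
        + (1 - cond_survival g (v g 0)) * (cexp M Y0 (stratum g 0 0) + d0))"
    using measure_mult_cexp_add_const[OF integrable_Y1, of "stratum g 0 1" d1]
      measure_mult_cexp_add_const[OF integrable_Y0, of "stratum g 0 0" d0]
      measure_stratum_treated[OF assms, of 0] measure_stratum_untreated[OF assms, of 0]
    by (simp add: algebra_simps)
  then show ?thesis
    using cell_pos assms by auto
qed

lemma cexp_outcome_period1:
  assumes "g \<in> {0,1}" "v g 1 \<le> v g 0"
  shows "cexp M Y (cell g 1)
    = cond_survival g (v g 0) * cexp M Y1 (stratum g 1 1)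
    + (1 - cond_survival g (v g 0)) * cexp M Y0 (stratum g 1 0)
    + (cond_survival g (v g 1) - cond_survival g (v g 0)) * cexp M (\<lambda>x. Y1 x - Y0 x) (compliers g)"
proof -
  have compliers_sets: "compliers g \<in> sets M"
    by measurable
  define never_takers where "never_takers = stratum g 1 0 - compliers g"
  have D_period1: "x \<in> cell g 1 \<Longrightarrow> D x = ptreat V G v 1 x" for x
    by (simp add: treat_eq_ptreat)
  have D0_le_D1: "x \<in> cell g 1 \<Longrightarrow> ptreat V G v 0 x \<le> ptreat V G v 1 x" for x
    using assms(2) by (auto intro: ptreat_mono)
  have "ptreat V G v 0 x < ptreat V G v 1 x \<Longrightarrow> ptreat V G v 0 x = 0" for x
    by (simp add: ptreat_def split: if_split_asm)
  then have untreated_split: "stratum g 1 0 = compliers g \<union> never_takers" "compliers g \<inter> never_takers = {}"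
    by (auto simp: never_takers_def)
  have cell_split: "cell g 1 = stratum g 1 1 \<union> stratum g 1 0" "stratum g 1 1 \<inter> stratum g 1 0 = {}"
    using ptreat_01[of V G v 0] by auto
  have "D x = 1" if "x \<in> stratum g 1 1" for x
    using that D_period1[of x] D0_le_D1[of x] ptreat_01[of V G v 1 x] by auto
  then have "cexp M Y (stratum g 1 1) = cexp M Y1 (stratum g 1 1)"
    by (intro cexp_cong) (auto simp: outcome_def)
  have "D x = 1" if "x \<in> compliers g" for x
    using that D_period1[of x] ptreat_01[of V G v 0 x] ptreat_01[of V G v 1 x] by auto
  then have "cexp M Y (compliers g) = cexp M Y1 (compliers g)"
    by (intro cexp_cong) (auto simp: outcome_def)
  moreover have "D x = 0" if "x \<in> never_takers" for x
    using that D_period1[of x] ptreat_01[of V G v 1 x] by (auto simp: never_takers_def)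
  then have "cexp M Y never_takers = cexp M Y0 never_takers"
    by (intro cexp_cong) (auto simp: outcome_def never_takers_def)
  ultimately have "measure M (stratum g 1 0) * cexp M Y (stratum g 1 0)
      = measure M (stratum g 1 0) * cexp M Y0 (stratum g 1 0)
      + measure M (compliers g) * cexp M (\<lambda>x. Y1 x - Y0 x) (compliers g)"
    using measure_mult_cexp_Un[OF integrable_outcome, of "compliers g" never_takers]
      measure_mult_cexp_Un[OF integrable_Y0, of "compliers g" never_takers] untreated_split
    unfolding cexp_diff[OF integrable_Y1 integrable_Y0 compliers_sets] never_takers_def
    by (simp add: algebra_simps)
  moreover have "measure M (cell g 1) * cexp M Y (cell g 1)
      = measure M (stratum g 1 1) * cexp M Y (stratum g 1 1) + measure M (stratum g 1 0) * cexp M Y (stratum g 1 0)"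
    using measure_mult_cexp_Un[OF integrable_outcome, of "stratum g 1 1" "stratum g 1 0"] cell_split by simp
  ultimately have "measure M (cell g 1) * cexp M Y (cell g 1)
      = measure M (cell g 1) * (cond_survival g (v g 0) * cexp M Y1 (stratum g 1 1)
        + (1 - cond_survival g (v g 0)) * cexp M Y0 (stratum g 1 0)
        + (cond_survival g (v g 1) - cond_survival g (v g 0)) * cexp M (\<lambda>x. Y1 x - Y0 x) (compliers g))"
    using \<open>cexp M Y (stratum g 1 1) = cexp M Y1 (stratum g 1 1)\<close>
      measure_stratum_treated[OF assms(1), of 1] measure_stratum_untreated[OF assms(1), of 1]
      measure_compliers[OF assms]
    by (simp add: algebra_simps)
  then show ?thesis
    using cell_pos assms by auto
qed

end

theorem theorem2:
  fixes M :: "'a measure" and Y0 Y1 V G T :: "'a \<Rightarrow> real" and v :: "real \<Rightarrow> real \<Rightarrow> real"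
  assumes P: "prob_space M"
    and rvY0: "Y0 \<in> borel_measurable M" and rvY1: "Y1 \<in> borel_measurable M"
    and rvV: "V \<in> borel_measurable M" and rvG: "G \<in> borel_measurable M"
    and rvT: "T \<in> borel_measurable M"
    and G01: "\<forall>x\<in>space M. G x \<in> {0, 1}" and T01: "\<forall>x\<in>space M. T x \<in> {0, 1}"
    and cells: "\<forall>g\<in>{0,1}. \<forall>t\<in>{0,1}. measure M {x\<in>space M. G x = g \<and> T x = t} > 0"
    and intY0: "integrable M Y0" and intY1: "integrable M Y1"
    \<comment> \<open>Assumption 1: V independent of T conditional on G\<close>
    and A1: "\<forall>g\<in>{0,1}. \<forall>t\<in>{0,1}. \<forall>B\<in>sets borel.
        measure M {x\<in>space M. V x \<in> B \<and> T x = t \<and> G x = g} * measure M {x\<in>space M. G x = g}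
      = measure M {x\<in>space M. V x \<in> B \<and> G x = g} * measure M {x\<in>space M. T x = t \<and> G x = g}"
    \<comment> \<open>Assumption 2\<close>
    and A2a: "cexp M (treat V G T v) {x\<in>space M. G x = 1 \<and> T x = 1}
            > cexp M (treat V G T v) {x\<in>space M. G x = 1 \<and> T x = 0}"
    and A2b: "cexp M (treat V G T v) {x\<in>space M. G x = 1 \<and> T x = 1}
              - cexp M (treat V G T v) {x\<in>space M. G x = 1 \<and> T x = 0}
            > cexp M (treat V G T v) {x\<in>space M. G x = 0 \<and> T x = 1}
              - cexp M (treat V G T v) {x\<in>space M. G x = 0 \<and> T x = 0}"
    \<comment> \<open>Assumption 3': conditional common trends\<close>
    and A3: "\<forall>d\<in>{0::real,1}. \<forall>g\<in>{0,1}. \<forall>g'\<in>{0,1}.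
        cexp M (if d = 1 then Y1 else Y0) {x\<in>space M. G x = g \<and> T x = 1 \<and> ptreat V G v 0 x = d}
      - cexp M (if d = 1 then Y1 else Y0) {x\<in>space M. G x = g \<and> T x = 0 \<and> ptreat V G v 0 x = d}
      = cexp M (if d = 1 then Y1 else Y0) {x\<in>space M. G x = g' \<and> T x = 1 \<and> ptreat V G v 0 x = d}
      - cexp M (if d = 1 then Y1 else Y0) {x\<in>space M. G x = g' \<and> T x = 0 \<and> ptreat V G v 0 x = d}"
    \<comment> \<open>Assumption 5\<close>
    and A5a: "0 < cexp M (treat V G T v) {x\<in>space M. G x = 0 \<and> T x = 1}"
    and A5b: "cexp M (treat V G T v) {x\<in>space M. G x = 0 \<and> T x = 1}
            = cexp M (treat V G T v) {x\<in>space M. G x = 0 \<and> T x = 0}"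
    and A5c: "cexp M (treat V G T v) {x\<in>space M. G x = 0 \<and> T x = 1} < 1"
  shows "(let D = treat V G T v; Y = outcome D Y0 Y1;
             \<delta> = (\<lambda>d. cexp M Y {x\<in>space M. D x = d \<and> G x = 0 \<and> T x = 1}
                     - cexp M Y {x\<in>space M. D x = d \<and> G x = 0 \<and> T x = 0})
         in (cexp M Y {x\<in>space M. G x = 1 \<and> T x = 1}
              - cexp M (\<lambda>x. Y x + (1 - D x) * \<delta> 0 + D x * \<delta> 1) {x\<in>space M. G x = 1 \<and> T x = 0})
            / (cexp M D {x\<in>space M. G x = 1 \<and> T x = 1} - cexp M D {x\<in>space M. G x = 1 \<and> T x = 0}))
       = cexp M (\<lambda>x. Y1 x - Y0 x)
           {x\<in>space M. ptreat V G v 0 x < ptreat V G v 1 x \<and> G x = 1 \<and> T x = 1}"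
proof -
  interpret threshold_did M Y0 Y1 V G T v
    using P rvY0 rvY1 rvV rvG rvT G01 T01 cells intY0 intY1 A1
    by (simp add: threshold_did_def threshold_did_axioms_def)
  define \<delta> where "\<delta> d = cexp M Y {x\<in>space M. D x = d \<and> G x = 0 \<and> T x = 1}
    - cexp M Y {x\<in>space M. D x = d \<and> G x = 0 \<and> T x = 0}" for d
  let ?p = "cond_survival 1 (v 1 0)" and ?p1 = "cond_survival 1 (v 1 1)"
  have take_up: "cexp M D (cell 1 1) - cexp M D (cell 1 0) = ?p1 - ?p"
    by (simp add: cexp_treat_cell)
  have "v 1 1 \<le> v 1 0"
    using threshold_decreasing[of 1] A2a by simp
  note period1 = cexp_outcome_period1[of 1, OF _ this]
  have trend: "\<delta> d = cexp M (if d = 1 then Y1 else Y0) (stratum 1 1 d)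
      - cexp M (if d = 1 then Y1 else Y0) (stratum 1 0 d)" if "d \<in> {0,1}" for d
    unfolding \<delta>_def outcome_trend_stable_group[of 0, OF _ that A5b, simplified]
    using A3 that by blast
  have "cexp M Y (cell 1 1) - cexp M (\<lambda>x. Y x + (1 - D x) * \<delta> 0 + D x * \<delta> 1) (cell 1 0)
      = (?p1 - ?p) * cexp M (\<lambda>x. Y1 x - Y0 x) (compliers 1)"
    unfolding cexp_adjusted_outcome_period0[of 1 "\<delta> 0" "\<delta> 1", simplified] period1[simplified]
    unfolding trend[of 0, simplified] trend[of 1, simplified]
    by (simp add: algebra_simps)
  then have "(cexp M Y (cell 1 1) - cexp M (\<lambda>x. Y x + (1 - D x) * \<delta> 0 + D x * \<delta> 1) (cell 1 0))
      / (cexp M D (cell 1 1) - cexp M D (cell 1 0)) = cexp M (\<lambda>x. Y1 x - Y0 x) (compliers 1)"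
    using take_up A2a by simp
  then show ?thesis
    unfolding Let_def \<delta>_def .
qed

end
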